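(* Let $\hbar,\alpha,g_0,\kappa_0,b_0>0$ and $\lambda>2b_0$, and let $\Delta\tau=\Delta\tau_O=\frac{4\lambda\kappa_0}{\alpha g_0(\lambda-2b_0)}$, $K=\frac{2\lambda\kappa_0}{\alpha g_0\Delta\tau}$, $C=\frac{\alpha g_0\Delta\tau}{2\lambda\kappa_0}$. Define the pointer states by their position kernels $$\rho_\pm(b,b')=\frac{C}{b_0\pi}\,\frac{\sin[K(b-b')]}{b-b'}\,\frac{\sin(b_0b)}{b}\,\frac{\sin(b_0b')}{b'}\,e^{\pm\frac{i\lambda}{2}(b-b')},$$ and their momentum densities $\langle s|\rho_\pm|s\rangle=\frac{1}{2\pi\hbar}\int\!\!\int e^{-is(b-b')/\hbar}\rho_\pm(b,b')\,db\,db'$. Then $\langle s|\rho_-|s\rangle=\langle -s|\rho_+|-s\rangle$, and $\langle s|\rho_+|s\rangle$ vanishes outside $[0,\lambda\hbar]$ and is given on $[0,\lambda\hbar]$ as follows: (i) if $\lambda>4b_0$: $\frac{s}{2b_0\hbar^2(\lambda-2b_0)}$ on $[0,2b_0\hbar]$, $\frac{1}{(\lambda-2b_0)\hbar}$ on $[2b_0\hbar,(\lambda-2b_0)\hbar]$, $\frac{\lambda-s/\hbar}{2b_0\hbar(\lambda-2b_0)}$ on $[(\lambda-2b_0)\hbar,\lambda\hbar]$; (ii) if $2b_0<\lambda<4b_0$: $\frac{s}{2b_0\hbar^2(\lambda-2b_0)}$ on $[0,(\lambda-2b_0)\hbar]$, $\frac{1}{2b_0\hbar}$ on $[(\lambda-2b_0)\hbar,2b_0\hbar]$,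 $\frac{\lambda-s/\hbar}{2b_0\hbar(\lambda-2b_0)}$ on $[2b_0\hbar,\lambda\hbar]$; (iii) if $\lambda=4b_0$: $\frac{4s}{\lambda^2\hbar^2}$ on $[0,\lambda\hbar/2]$ and $\frac{4(\lambda-s/\hbar)}{\lambda^2\hbar}$ on $[\lambda\hbar/2,\lambda\hbar]$. In particular the momentum densities of $\rho_+$ and $\rho_-$ have supports $[0,\lambda\hbar]$ and $[-\lambda\hbar,0]$, which do not overlap except at $s=0$.
   Context: $\rho_\pm$ are the pointer states in the measurement of $S_z$ of a spin-1/2 particle with probe initial state $\frac{1}{\sqrt{\kappa_0\pi}}\frac{\sin(\kappa_0 q)}{q}$ and pointer initial state $\frac{1}{\sqrt{b_0\pi}}\frac{\sin(b_0 b)}{b}$; $s$ is the pointer momentum variable, with $\langle s|b\rangle=e^{isb/\hbar}/\sqrt{2\pi\hbar}$. *)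

theory Defs
  imports "HOL-Analysis.Analysis"
begin

definition dtauO :: "real \<Rightarrow> real \<Rightarrow> real \<Rightarrow> real \<Rightarrow> real \<Rightarrow> real" where
  "dtauO alpha g0 kappa0 b0 lam = 4 * lam * kappa0 / (alpha * g0 * (lam - 2 * b0))"

definition Kpar :: "real \<Rightarrow> real \<Rightarrow> real \<Rightarrow> real \<Rightarrow> real \<Rightarrow> real" where
  "Kpar alpha g0 kappa0 b0 lam = 2 * lam * kappa0 / (alpha * g0 * dtauO alpha g0 kappa0 b0 lam)"

definition Cpar :: "real \<Rightarrow> real \<Rightarrow> real \<Rightarrow> real \<Rightarrow> real \<Rightarrow> real" where
  "Cpar alpha g0 kappa0 b0 lam = alpha * g0 * dtauO alpha g0 kappa0 b0 lam / (2 * lam * kappa0)"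

text \<open>Position kernels of the pointer states rho_+ (sg = 1) and rho_- (sg = -1).
  The removable singularities at b = 0, b' = 0, b = b' form a null set.\<close>

definition rho_kernel :: "real \<Rightarrow> real \<Rightarrow> real \<Rightarrow> real \<Rightarrow> real \<Rightarrow> real \<Rightarrow> real \<Rightarrow> real \<Rightarrow> complex" where
  "rho_kernel sg alpha g0 kappa0 b0 lam b b' =
     complex_of_real
       (Cpar alpha g0 kappa0 b0 lam / (b0 * pi)
        * (sin (Kpar alpha g0 kappa0 b0 lam * (b - b')) / (b - b'))
        * (sin (b0 * b) / b) * (sin (b0 * b') / b'))
     * exp (complex_of_real sg * \<i> * complex_of_real (lam / 2 * (b - b')))"

definition rho_plus :: "real \<Rightarrow> real \<Rightarrow> real \<Rightarrow> real \<Rightarrow> real \<Rightarrow> real \<Rightarrow> real \<Rightarrow> complex" where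
  "rho_plus = rho_kernel 1"

definition rho_minus :: "real \<Rightarrow> real \<Rightarrow> real \<Rightarrow> real \<Rightarrow> real \<Rightarrow> real \<Rightarrow> real \<Rightarrow> complex" where
  "rho_minus = rho_kernel (-1)"

definition mom_density :: "real \<Rightarrow> (real \<Rightarrow> real \<Rightarrow> complex) \<Rightarrow> real \<Rightarrow> complex" where
  "mom_density hbar rho s =
     complex_of_real (1 / (2 * pi * hbar)) *
     (LINT b|lborel. LINT b'|lborel.
        exp (- \<i> * complex_of_real (s * (b - b') / hbar)) * rho b b')"

end

theory Submission
  imports Defs "HOL-Probability.Sinc_Integral" "HOL-Real_Asymp.Real_Asymp"
begin

text \<open>Up to a constant, the kernel of \<open>\<rho>\<^sub>\<plusminus>\<close> is \<open>sin(K(b - b'))/(b - b') \<cdot> \<psi>(b) \<psi>(b')\<close> with \<open>\<psi>(b) = sin(b\<^sub>0 b)/b\<close>,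
  \<open>K = \<lambda>/2 - b\<^sub>0\<close>, times the phase \<open>exp(\<plusminus>i\<lambda>(b - b')/2)\<close>. In momentum space \<open>sin(Ku)/u\<close> and \<open>\<psi>\<close> are \<open>\<pi>\<close>
  times the indicators of \<open>[-K, K]\<close> and \<open>[-b\<^sub>0, b\<^sub>0]\<close>, so \<open>\<langle>s|\<rho>\<^sub>\<plusminus>|s\<rangle>\<close> is proportional to the
  convolution of these two boxes at \<open>p = s/\<hbar> \<mp> \<lambda>/2\<close>, i.e.\ to the length of
  \<open>[-K, K] \<inter> [p - b\<^sub>0, p + b\<^sub>0]\<close>: a trapezoid in \<open>p\<close> supported on \<open>\<bar>p\<bar> \<le> K + b\<^sub>0 = \<lambda>/2\<close>.

  After partial fractions the inner integral is a sum
  of Dirichlet-type Fourier integrals of \<open>sin(\<cdot>)/\<cdot>\<close>, which converge only conditionally and are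
  evaluated as limits of integrals over growing windows; the outer integral then reduces to
  \<open>\<integral> (1 - cos(wx))/x\<^sup>2 dx = \<pi>\<bar>w\<bar>\<close>.\<close>

section \<open>The integral of \<open>(1 - cos(wx))/x\<^sup>2\<close>\<close>

lemma one_minus_cos_div_eq:
  fixes w x :: real
  shows "(1 - cos (w * x)) / x = w * (sin (w * x / 2) * sinc (w * x / 2))"
proof (cases "x = 0 \<or> w = 0")
  case True
  then show ?thesis by auto
next
  case False
  have "cos (w * x) = 1 - 2 * (sin (w * x / 2))\<^sup>2"
    using cos_double_sin[of "w * x / 2"] by simp
  then show ?thesis using False by (simp add: field_simps power2_eq_square)
qed

lemma Si_0: "Si 0 = 0"
  unfolding Si_def by (metis interval_integral_endpoints_same zero_ereal_def)

lemma einterval_0_infinity: "einterval 0 \<infinity> = {0<..}"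
  by (auto simp: einterval_def zero_ereal_def)

lemma tendsto_one_minus_cos_scale_div_at_top:
  fixes w :: real
  shows "((\<lambda>x. (1 - cos (w * x)) / x) \<longlongrightarrow> 0) at_top"
proof (rule tendsto_sandwich[where f="\<lambda>x. 0" and h="\<lambda>x. 2 / x"])
  show "\<forall>\<^sub>F x in at_top. 0 \<le> (1 - cos (w * x)) / x"
    using eventually_gt_at_top[of 0] by eventually_elim (auto simp: cos_le_one)
  show "\<forall>\<^sub>F x in at_top. (1 - cos (w * x)) / x \<le> 2 / x"
    using eventually_gt_at_top[of 0] by eventually_elim
      (use cos_ge_minus_one in \<open>auto intro!: divide_right_mono\<close>)
qed (simp, real_asymp)

text \<open>The antiderivative is \<open>w Si(wx) - (1 - cos(wx))/x\<close>, which tends to \<open>0\<close> at \<open>0\<close>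
  and to \<open>w\<pi>/2\<close> at \<open>\<infinity>\<close>.\<close>

lemma one_minus_cos_scale_div_sq_I0i:
  fixes w :: real
  assumes w: "w > 0"
  shows "set_integrable lborel {0<..} (\<lambda>x. (1 - cos (w * x)) / x\<^sup>2)"
    and "(LINT x:{0<..}|lborel. (1 - cos (w * x)) / x\<^sup>2) = w * pi / 2"
proof -
  define F where "F x = w * Si (w * x) - (1 - cos (w * x)) / x" for x
  have F_deriv: "DERIV F x :> (1 - cos (w * x)) / x\<^sup>2" if "0 < x" for x
  proof -
    have "DERIV F x :> w * (sinc (w * x) * w) - ((w * sin (w * x)) * x - (1 - cos (w * x)) * 1) / x\<^sup>2"
      unfolding F_def using that
      by (auto intro!: derivative_eq_intros DERIV_chain2[OF DERIV_Si] simp: power2_eq_square ac_simps)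
    moreover have "w * (sinc (w * x) * w) - ((w * sin (w * x)) * x - (1 - cos (w * x)) * 1) / x\<^sup>2
        = (1 - cos (w * x)) / x\<^sup>2"
      using that w by (simp add: field_simps power2_eq_square)
    ultimately show ?thesis by simp
  qed
  have F_at_0: "((F \<circ> real_of_ereal) \<longlongrightarrow> 0) (at_right (ereal 0))"
  proof -
    have F_eq: "F x = w * Si (w * x) - w * (sin (w * x / 2) * sinc (w * x / 2))" for x
      unfolding F_def one_minus_cos_div_eq ..
    have "isCont (\<lambda>x. w * Si (w * x) - w * (sin (w * x / 2) * sinc (w * x / 2))) 0"
      by (intro continuous_intros isCont_o2[OF _ isCont_Si] isCont_o2[OF _ isCont_sinc]) auto
    then have "((\<lambda>x. w * Si (w * x) - w * (sin (w * x / 2) * sinc (w * x / 2))) \<longlongrightarrow>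
        w * Si (w * 0) - w * (sin (w * 0 / 2) * sinc (w * 0 / 2))) (at_right 0)"
      unfolding isCont_def by (rule tendsto_mono[OF at_within_le_at])
    then show ?thesis unfolding ereal_tendsto_simps F_eq by (simp add: Si_0)
  qed
  have F_at_top: "((F \<circ> real_of_ereal) \<longlongrightarrow> w * pi / 2) (at_left \<infinity>)"
  proof -
    have Si_lim: "((\<lambda>x. w * Si (w * x)) \<longlongrightarrow> w * (pi / 2)) at_top"
      by (intro tendsto_mult tendsto_const filterlim_compose[OF Si_at_top])
         (simp add: filterlim_tendsto_pos_mult_at_top[OF tendsto_const w filterlim_ident])
    show ?thesis unfolding ereal_tendsto_simps F_def
      using tendsto_diff[OF Si_lim tendsto_one_minus_cos_scale_div_at_top] by simp
  qed
  have "set_integrable lborel (einterval 0 \<infinity>) (\<lambda>x. (1 - cos (w * x)) / x\<^sup>2)"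
    "(LBINT x=0..\<infinity>. (1 - cos (w * x)) / x\<^sup>2) = w * pi / 2"
    using interval_integral_FTC_nonneg[of 0 \<infinity> F "\<lambda>x. (1 - cos (w * x)) / x\<^sup>2" 0 "w * pi / 2"]
      F_deriv F_at_0 F_at_top
    by (auto simp: zero_ereal_def cos_le_one intro!: continuous_intros)
  then show "set_integrable lborel {0<..} (\<lambda>x. (1 - cos (w * x)) / x\<^sup>2)"
    "(LINT x:{0<..}|lborel. (1 - cos (w * x)) / x\<^sup>2) = w * pi / 2"
    by (simp_all add: einterval_0_infinity interval_lebesgue_integral_def)
qed

lemma lborel_integral_even:
  fixes f :: "real \<Rightarrow> real"
  assumes even: "\<And>x. f (- x) = f x" and "f 0 = 0"
    and int: "set_integrable lborel {0<..} f"
  shows "integrable lborel f" "integral\<^sup>L lborel f = 2 * (LINT x:{0<..}|lborel. f x)"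
proof -
  define g where "g x = indicator {0<..} x * f x" for x
  have g: "integrable lborel g" using int unfolding set_integrable_def g_def by simp
  have g_reflect: "integrable lborel (\<lambda>x. g (- x))"
    using lborel_integrable_real_affine[OF g, of "-1" 0] by simp
  have f_eq: "f x = g x + g (- x)" for x
    using even[of x] \<open>f 0 = 0\<close> unfolding g_def
    by (cases "x > 0"; cases "x < 0") (auto simp: indicator_def)
  show "integrable lborel f" unfolding f_eq[abs_def] using g g_reflect by simp
  have "integral\<^sup>L lborel f = integral\<^sup>L lborel g + integral\<^sup>L lborel (\<lambda>x. g (- x))"
    unfolding f_eq[abs_def] using g g_reflect by simp
  also have "integral\<^sup>L lborel (\<lambda>x. g (- x)) = integral\<^sup>L lborel g"
    using lborel_integral_real_affine[of "-1" g 0] by simp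
  finally show "integral\<^sup>L lborel f = 2 * (LINT x:{0<..}|lborel. f x)"
    unfolding g_def set_lebesgue_integral_def by simp
qed

lemma lborel_integral_odd:
  fixes f :: "real \<Rightarrow> 'b::{banach, second_countable_topology}"
  assumes "\<And>x. f (- x) = - f x"
  shows "integral\<^sup>L lborel f = 0"
proof -
  have "integral\<^sup>L lborel f = integral\<^sup>L lborel (\<lambda>x. f (- x))"
    using lborel_integral_real_affine[of "-1" f 0] by simp
  also have "\<dots> = - integral\<^sup>L lborel f" by (simp add: assms)
  finally show ?thesis by (simp add: eq_neg_iff_add_eq_0 scaleR_2[symmetric])
qed

lemma
  fixes w :: real
  shows integrable_one_minus_cos_scale_div_sq: "integrable lborel (\<lambda>x. (1 - cos (w * x)) / x\<^sup>2)"
    and LBINT_one_minus_cos_scale_div_sq: "(LBINT x. (1 - cos (w * x)) / x\<^sup>2) = pi * \<bar>w\<bar>"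
proof -
  have "cos (w * x) = cos (\<bar>w\<bar> * x)" for x
    using cos_minus[of "w * x"] by (cases "w \<ge> 0") auto
  moreover have "integrable lborel (\<lambda>x. (1 - cos (u * x)) / x\<^sup>2)
      \<and> (LBINT x. (1 - cos (u * x)) / x\<^sup>2) = pi * u" if "u > 0" for u
    using lborel_integral_even[of "\<lambda>x. (1 - cos (u * x)) / x\<^sup>2"] one_minus_cos_scale_div_sq_I0i[OF that]
    by simp
  ultimately have "integrable lborel (\<lambda>x. (1 - cos (w * x)) / x\<^sup>2)
      \<and> (LBINT x. (1 - cos (w * x)) / x\<^sup>2) = pi * \<bar>w\<bar>"
    by (cases "w = 0") simp_all
  then show "integrable lborel (\<lambda>x. (1 - cos (w * x)) / x\<^sup>2)"
    "(LBINT x. (1 - cos (w * x)) / x\<^sup>2) = pi * \<bar>w\<bar>" by auto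
qed

lemma
  fixes a c :: real
  shows integrable_sin_mult_sin_div_sq: "integrable lborel (\<lambda>x. sin (a * x) * sin (c * x) / x\<^sup>2)"
    and LBINT_sin_mult_sin_div_sq:
      "(LBINT x. sin (a * x) * sin (c * x) / x\<^sup>2) = pi / 2 * (\<bar>a + c\<bar> - \<bar>a - c\<bar>)"
proof -
  have eq: "sin (a * x) * sin (c * x) / x\<^sup>2
      = ((1 - cos ((a + c) * x)) / x\<^sup>2 - (1 - cos ((a - c) * x)) / x\<^sup>2) / 2" for x
    by (simp add: cos_diff cos_add algebra_simps diff_divide_distrib[symmetric]
        add_divide_distrib[symmetric])
  show "integrable lborel (\<lambda>x. sin (a * x) * sin (c * x) / x\<^sup>2)"
    unfolding eq using integrable_one_minus_cos_scale_div_sq by simp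
  show "(LBINT x. sin (a * x) * sin (c * x) / x\<^sup>2) = pi / 2 * (\<bar>a + c\<bar> - \<bar>a - c\<bar>)"
    unfolding eq using integrable_one_minus_cos_scale_div_sq[of "a + c"]
      integrable_one_minus_cos_scale_div_sq[of "a - c"]
      LBINT_one_minus_cos_scale_div_sq[of "a + c"] LBINT_one_minus_cos_scale_div_sq[of "a - c"]
    by (simp add: algebra_simps) (simp add: field_simps)
qed

lemma integrable_sin_scale_div_sq:
  fixes c t :: real
  shows "integrable lborel (\<lambda>x. (sin (c * (t - x)) / (t - x))\<^sup>2)"
proof -
  have eq: "(sin (c * x) / x)\<^sup>2 = (1 - cos ((2 * c) * x)) / x\<^sup>2 / 2" for x
  proof -
    have "1 - cos ((2 * c) * x) = 2 * (sin (c * x))\<^sup>2"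
      using cos_double_sin[of "c * x"] by (simp add: algebra_simps)
    then show ?thesis by (simp add: power_divide)
  qed
  have "integrable lborel (\<lambda>x. (sin (c * x) / x)\<^sup>2)"
    unfolding eq by (intro integrable_divide integrable_one_minus_cos_scale_div_sq)
  from lborel_integrable_real_affine[OF this, of "-1" t] show ?thesis by simp
qed

section \<open>Window integrals\<close>

definition window_integral ::
    "real \<Rightarrow> real \<Rightarrow> (real \<Rightarrow> 'a::{banach, second_countable_topology}) \<Rightarrow> 'a" where
  "window_integral d R f = (LBINT x. indicator {d - R<..<d + R} x *\<^sub>R f x)"

lemma integrable_indicator_bounded:
  fixes f :: "real \<Rightarrow> 'b::{banach, second_countable_topology}"
  assumes "f \<in> borel_measurable lborel" "\<And>x. norm (f x) \<le> B"
  shows "integrable lborel (\<lambda>x. indicator {a<..<b} x *\<^sub>R f x)"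
proof (rule Bochner_Integration.integrable_bound)
  have "emeasure lborel {a<..<b} < \<infinity>" by (cases "a \<le> b") auto
  then show "integrable lborel (\<lambda>x. B * indicator {a<..<b} x)" by simp
  show "(\<lambda>x. indicator {a<..<b} x *\<^sub>R f x) \<in> borel_measurable lborel"
    using assms(1) by measurable
  show "AE x in lborel. norm (indicator {a<..<b} x *\<^sub>R f x) \<le> norm (B * indicator {a<..<b} x :: real)"
    using assms(2) by (auto simp: indicator_def intro!: AE_I2) (metis norm_ge_zero order.trans abs_of_nonneg)
qed

lemma window_integral_tendsto:
  fixes f :: "real \<Rightarrow> 'b::{banach, second_countable_topology}"
  assumes "integrable lborel f"
  shows "((\<lambda>R. window_integral d R f) \<longlongrightarrow> integral\<^sup>L lborel f) at_top"
  unfolding window_integral_def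
proof (rule integral_dominated_convergence_at_top[where w="\<lambda>x. norm (f x)"])
  show "AE x in lborel. ((\<lambda>R. indicator {d - R<..<d + R} x *\<^sub>R f x) \<longlongrightarrow> f x) at_top"
  proof (intro AE_I2 tendsto_eventually)
    fix x
    show "\<forall>\<^sub>F R in at_top. indicator {d - R<..<d + R} x *\<^sub>R f x = f x"
      using eventually_gt_at_top[of "\<bar>x - d\<bar>"] by eventually_elim (auto simp: indicator_def)
  qed
  show "\<forall>\<^sub>F R in at_top. AE x in lborel. norm (indicator {d - R<..<d + R} x *\<^sub>R f x) \<le> norm (f x)"
    by (auto simp: indicator_def)
qed (use assms in auto)

lemma
  fixes a x :: real
  shows abs_sin_scale_div_le: "\<bar>sin (a * x) / x\<bar> \<le> max \<bar>a\<bar> 1"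
    and abs_sin_scale_div_le_inverse: "x \<noteq> 0 \<Longrightarrow> \<bar>sin (a * x) / x\<bar> \<le> max \<bar>a\<bar> 1 / \<bar>x\<bar>"
proof -
  show "\<bar>sin (a * x) / x\<bar> \<le> max \<bar>a\<bar> 1"
  proof (cases "x = 0")
    case False
    have "\<bar>sin (a * x)\<bar> \<le> \<bar>a\<bar> * \<bar>x\<bar>"
      using abs_sin_x_le_abs_x[of "a * x"] by (simp add: abs_mult)
    then have "\<bar>sin (a * x) / x\<bar> \<le> \<bar>a\<bar>" using False by (simp add: abs_divide divide_le_eq)
    then show ?thesis by simp
  qed simp
  assume "x \<noteq> 0"
  then show "\<bar>sin (a * x) / x\<bar> \<le> max \<bar>a\<bar> 1 / \<bar>x\<bar>"
    by (simp add: abs_divide divide_right_mono le_max_iff_disj)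
qed

lemma integrable_window_bounded_mult_sin_div:
  fixes g :: "real \<Rightarrow> real"
  assumes g: "g \<in> borel_measurable lborel" and g_le_1: "\<And>x. \<bar>g x\<bar> \<le> 1"
  shows "integrable lborel (\<lambda>x. indicator {a<..<b} x * (g x * sin (c * x) / x))"
proof -
  have "(\<lambda>x. g x * sin (c * x) / x) \<in> borel_measurable lborel" using g by measurable
  moreover have "norm (g x * sin (c * x) / x) \<le> max \<bar>c\<bar> 1" for x
  proof -
    have "\<bar>g x * sin (c * x) / x\<bar> = \<bar>g x\<bar> * \<bar>sin (c * x) / x\<bar>" by (simp add: abs_mult)
    also have "\<dots> \<le> 1 * \<bar>sin (c * x) / x\<bar>" using g_le_1 by (intro mult_right_mono) auto
    finally show ?thesis using abs_sin_scale_div_le[of c x] by simp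
  qed
  ultimately have "integrable lborel (\<lambda>x. indicator {a<..<b} x *\<^sub>R (g x * sin (c * x) / x))"
    by (rule integrable_indicator_bounded)
  then show ?thesis by simp
qed

lemma indicator_window_shift_neq:
  fixes d R x :: real
  assumes "indicator {d - R<..<d + R} x \<noteq> (indicator {- R<..<R} x :: real)"
  shows "(R - \<bar>d\<bar> \<le> x \<and> x \<le> R + \<bar>d\<bar>) \<or> (- R - \<bar>d\<bar> \<le> x \<and> x \<le> - R + \<bar>d\<bar>)"
proof -
  from assms have "(d - R < x \<and> x < d + R) \<noteq> (- R < x \<and> x < R)"
    by (auto simp: indicator_def)
  then show ?thesis by (cases "d \<ge> 0") auto
qed

text \<open>For \<open>f = O(1/x)\<close> the two windows differ only on two intervals of length \<open>2\<bar>d\<bar>\<close> near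
  \<open>\<plusminus>R\<close>, where \<open>\<bar>f\<bar> \<le> B/(R - \<bar>d\<bar>)\<close>.\<close>

lemma window_integral_shift_tendsto_0:
  fixes f :: "real \<Rightarrow> real"
  assumes f: "f \<in> borel_measurable lborel" and bound: "\<And>x. \<bar>f x\<bar> \<le> B"
    and decay: "\<And>x. x \<noteq> 0 \<Longrightarrow> \<bar>f x\<bar> \<le> B / \<bar>x\<bar>"
  shows "((\<lambda>R. window_integral d R f - window_integral 0 R f) \<longlongrightarrow> 0) at_top"
proof (rule Lim_null_comparison)
  define e where "e = \<bar>d\<bar>"
  have "B \<ge> 0" using bound[of 0] by simp
  show "((\<lambda>R. 4 * e * B / (R - e)) \<longlongrightarrow> 0) at_top" by real_asymp
  show "\<forall>\<^sub>F R in at_top. norm (window_integral d R f - window_integral 0 R f) \<le> 4 * e * B / (R - e)"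
    using eventually_gt_at_top[of "2 * e + 1"]
  proof eventually_elim
    case (elim R)
    have "R - e > 0" "e \<ge> 0" using elim by (auto simp: e_def)
    have int: "integrable lborel (\<lambda>x. indicator {a<..<b} x * f x)" for a b
      using integrable_indicator_bounded[OF f, of B a b] bound by simp
    define g where "g x = B / (R - e) * (indicator {R - e..R + e} x + indicator {- R - e..- R + e} x)"
      for x
    have g: "integrable lborel g" unfolding g_def using \<open>e \<ge> 0\<close>
      by (intro integrable_mult_right Bochner_Integration.integrable_add integrable_real_indicator) auto
    have diff_le_g: "\<bar>indicator {d - R<..<d + R} x * f x - indicator {- R<..<R} x * f x\<bar> \<le> g x" for x
    proof (cases "indicator {d - R<..<d + R} x = (indicator {- R<..<R} x :: real)")
      case True
      then show ?thesis using \<open>B \<ge> 0\<close> \<open>R - e > 0\<close> by (simp add: g_def)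
    next
      case False
      then have x: "(R - e \<le> x \<and> x \<le> R + e) \<or> (- R - e \<le> x \<and> x \<le> - R + e)"
        unfolding e_def by (rule indicator_window_shift_neq)
      then have "\<bar>x\<bar> \<ge> R - e" "x \<noteq> 0" using \<open>R - e > 0\<close> by auto
      have "\<bar>f x\<bar> \<le> B / \<bar>x\<bar>" using decay \<open>x \<noteq> 0\<close> .
      also have "\<dots> \<le> B / (R - e)"
        using \<open>\<bar>x\<bar> \<ge> R - e\<close> \<open>B \<ge> 0\<close> \<open>R - e > 0\<close> by (intro divide_left_mono) auto
      finally have "\<bar>f x\<bar> \<le> B / (R - e)" .
      then show ?thesis
        using x \<open>B \<ge> 0\<close> \<open>R - e > 0\<close> by (auto simp: g_def indicator_def)
    qed
    have "norm (window_integral d R f - window_integral 0 R f)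
        = norm (LBINT x. indicator {d - R<..<d + R} x * f x - indicator {- R<..<R} x * f x)"
      using int by (simp add: window_integral_def)
    also have "\<dots> \<le> integral\<^sup>L lborel g"
      by (rule Bochner_Integration.integral_norm_bound_integral) (use int g diff_le_g in auto)
    also have "integral\<^sup>L lborel g = 4 * e * B / (R - e)"
      unfolding g_def using \<open>R - e > 0\<close> \<open>e \<ge> 0\<close> by (simp add: measure_def)
    finally show ?case .
  qed
qed

lemma window_integral_0_sin_scale_div:
  fixes a R :: real
  assumes "R > 0"
  shows "window_integral 0 R (\<lambda>x. sin (a * x) / x) = 2 * (sgn a * Si (R * \<bar>a\<bar>))"
proof -
  define f where "f x = indicator {- R<..<R} x * (sin (a * x) / x)" for x
  have half: "indicator {0<..} x *\<^sub>R f x = indicator {0<..<R} x *\<^sub>R (sin (x * a) / x)" for x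
    unfolding f_def using assms by (auto simp: indicator_def mult.commute)
  have f: "set_integrable lborel {0<..} f"
    unfolding set_integrable_def half
    by (rule integrable_indicator_bounded[where B="max \<bar>a\<bar> 1"])
      (use abs_sin_scale_div_le[of a] in \<open>auto simp: mult.commute\<close>)
  have "(LBINT x. f x) = 2 * (LINT x:{0<..}|lborel. f x)"
    by (rule lborel_integral_even(2)[OF _ _ f]) (auto simp: f_def indicator_def)
  also have "(LINT x:{0<..}|lborel. f x) = (LBINT t=0..R. sin (t * a) / t)"
    unfolding set_lebesgue_integral_def half interval_lebesgue_integral_def using assms
    by (simp add: zero_ereal_def set_lebesgue_integral_def)
  also have "\<dots> = sgn a * Si (R * \<bar>a\<bar>)" using LBINT_I0c_sin_scale_divide[of R a] assms by simp
  finally show ?thesis unfolding f_def window_integral_def by simp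
qed

lemma window_integral_sin_scale_div_tendsto:
  fixes a d :: real
  shows "((\<lambda>R. window_integral d R (\<lambda>x. sin (a * x) / x)) \<longlongrightarrow> pi * sgn a) at_top"
proof -
  have "((\<lambda>R. 2 * (sgn a * Si (R * \<bar>a\<bar>))) \<longlongrightarrow> pi * sgn a) at_top"
  proof (cases "a = 0")
    case False
    then have "filterlim (\<lambda>R. R * \<bar>a\<bar>) at_top at_top"
      by (intro filterlim_at_top_mult_tendsto_pos[OF tendsto_const]) (auto intro: filterlim_ident)
    from filterlim_compose[OF Si_at_top this]
    have "((\<lambda>R. 2 * (sgn a * Si (R * \<bar>a\<bar>))) \<longlongrightarrow> 2 * (sgn a * (pi / 2))) at_top"
      by (intro tendsto_intros)
    then show ?thesis by (simp add: algebra_simps)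
  qed simp
  moreover have "\<forall>\<^sub>F R in at_top. 2 * (sgn a * Si (R * \<bar>a\<bar>)) = window_integral 0 R (\<lambda>x. sin (a * x) / x)"
    using eventually_gt_at_top[of 0] by eventually_elim (simp add: window_integral_0_sin_scale_div)
  ultimately have centred: "((\<lambda>R. window_integral 0 R (\<lambda>x. sin (a * x) / x)) \<longlongrightarrow> pi * sgn a) at_top"
    by (rule Lim_transform_eventually)
  have shift: "((\<lambda>R. window_integral d R (\<lambda>x. sin (a * x) / x) - window_integral 0 R (\<lambda>x. sin (a * x) / x))
      \<longlongrightarrow> 0) at_top"
    by (rule window_integral_shift_tendsto_0[OF _ abs_sin_scale_div_le abs_sin_scale_div_le_inverse]) measurable
  from tendsto_add[OF shift centred] show ?thesis by simp
qed

lemma window_integral_sin_mult_sin_div_tendsto: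
  fixes w c d :: real
  shows "((\<lambda>R. window_integral d R (\<lambda>x. sin (w * x) * sin (c * x) / x)) \<longlongrightarrow> 0) at_top"
proof -
  have factor: "\<bar>sin (w * x) * sin (c * x) / x\<bar> \<le> \<bar>sin (w * x) / x\<bar>" for x
    by (auto simp: abs_mult abs_divide intro!: divide_right_mono mult_left_le)
  have "((\<lambda>R. window_integral d R (\<lambda>x. sin (w * x) * sin (c * x) / x)
      - window_integral 0 R (\<lambda>x. sin (w * x) * sin (c * x) / x)) \<longlongrightarrow> 0) at_top"
    using factor abs_sin_scale_div_le[of w] abs_sin_scale_div_le_inverse[of _ w]
    by (intro window_integral_shift_tendsto_0[where B="max \<bar>w\<bar> 1"]) (auto intro: order_trans)
  moreover have "window_integral 0 R (\<lambda>x. sin (w * x) * sin (c * x) / x) = 0" for R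
    unfolding window_integral_def by (rule lborel_integral_odd) (auto simp: indicator_def)
  ultimately show ?thesis by simp
qed

text \<open>\<open>\<pi> \<cdot> dirichlet_box c w\<close> is the Fourier transform of \<open>sin(cx)/x\<close> at frequency \<open>w\<close>
  (for \<open>c > 0\<close>): the indicator of \<open>\<bar>w\<bar> < c\<close>, with the mean value \<open>1/2\<close> at the jumps.\<close>

definition dirichlet_box :: "real \<Rightarrow> real \<Rightarrow> real" where
  "dirichlet_box c w = (sgn (c + w) + sgn (c - w)) / 2"

lemma dirichlet_box_uminus [simp]: "dirichlet_box c (- w) = dirichlet_box c w"
  unfolding dirichlet_box_def by simp

lemma window_integral_cos_mult_sin_div_tendsto:
  fixes w c d :: real
  shows "((\<lambda>R. window_integral d R (\<lambda>x. cos (w * x) * sin (c * x) / x))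
    \<longlongrightarrow> pi * dirichlet_box c w) at_top"
proof -
  have int: "integrable lborel (\<lambda>x. indicator {d - R<..<d + R} x * (sin (a * x) / x))" for a R
    using integrable_indicator_bounded[of "\<lambda>x. sin (a * x) / x" "max \<bar>a\<bar> 1" "d - R" "d + R"]
      abs_sin_scale_div_le[of a]
    by simp
  have eq: "indicator {d - R<..<d + R} x * (cos (w * x) * sin (c * x) / x) =
      (indicator {d - R<..<d + R} x * (sin ((c + w) * x) / x)
       + indicator {d - R<..<d + R} x * (sin ((c - w) * x) / x)) / 2" for x R
    by (simp add: sin_add sin_diff algebra_simps add_divide_distrib[symmetric]
        diff_divide_distrib[symmetric])
  have "window_integral d R (\<lambda>x. cos (w * x) * sin (c * x) / x) =
      (window_integral d R (\<lambda>x. sin ((c + w) * x) / x) + window_integral d R (\<lambda>x. sin ((c - w) * x) / x)) / 2"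
    for R
    unfolding window_integral_def real_scaleR_def eq
    using int[where a="c + w" and R=R] int[where a="c - w" and R=R] by simp
  moreover have "((\<lambda>R. (window_integral d R (\<lambda>x. sin ((c + w) * x) / x)
      + window_integral d R (\<lambda>x. sin ((c - w) * x) / x)) / 2)
      \<longlongrightarrow> (pi * sgn (c + w) + pi * sgn (c - w)) / 2) at_top"
    by (intro tendsto_intros window_integral_sin_scale_div_tendsto) simp
  ultimately show ?thesis by (simp add: dirichlet_box_def algebra_simps add_divide_distrib)
qed

lemma window_integral_cis_mult_sin_div_tendsto:
  fixes w c d :: real
  shows "((\<lambda>R. window_integral d R (\<lambda>x. cis (w * x) * complex_of_real (sin (c * x) / x)))
    \<longlongrightarrow> complex_of_real (pi * dirichlet_box c w)) at_top"
proof -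
  have "window_integral d R (\<lambda>x. cis (w * x) * complex_of_real (sin (c * x) / x)) =
      complex_of_real (window_integral d R (\<lambda>x. cos (w * x) * sin (c * x) / x))
      + \<i> * complex_of_real (window_integral d R (\<lambda>x. sin (w * x) * sin (c * x) / x))" for R
  proof -
    have split: "indicator {d - R<..<d + R} x *\<^sub>R (cis (w * x) * complex_of_real (sin (c * x) / x)) =
        complex_of_real (indicator {d - R<..<d + R} x * (cos (w * x) * sin (c * x) / x))
        + \<i> * complex_of_real (indicator {d - R<..<d + R} x * (sin (w * x) * sin (c * x) / x))" for x
      by (simp add: complex_eq_iff)
    have re: "integrable lborel
        (\<lambda>x. complex_of_real (indicator {d - R<..<d + R} x * (cos (w * x) * sin (c * x) / x)))"
      using integrable_window_bounded_mult_sin_div[of "\<lambda>x. cos (w * x)"] by (intro integrable_of_real) auto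
    have im: "integrable lborel
        (\<lambda>x. \<i> * complex_of_real (indicator {d - R<..<d + R} x * (sin (w * x) * sin (c * x) / x)))"
      using integrable_window_bounded_mult_sin_div[of "\<lambda>x. sin (w * x)"]
      by (intro integrable_mult_right integrable_of_real) auto
    show ?thesis unfolding window_integral_def split real_scaleR_def
      by (simp only: Bochner_Integration.integral_add[OF re im] integral_mult_right_zero
          integral_complex_of_real)
  qed
  moreover have "((\<lambda>R. complex_of_real (window_integral d R (\<lambda>x. cos (w * x) * sin (c * x) / x))
      + \<i> * complex_of_real (window_integral d R (\<lambda>x. sin (w * x) * sin (c * x) / x)))
      \<longlongrightarrow> complex_of_real (pi * dirichlet_box c w) + \<i> * complex_of_real 0) at_top"
    by (intro tendsto_intros window_integral_cos_mult_sin_div_tendsto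
        window_integral_sin_mult_sin_div_tendsto)
  ultimately show ?thesis by simp
qed

section \<open>The sinc kernel in momentum space\<close>

lemma borel_measurable_cis [measurable]: "cis \<in> borel_measurable borel"
  by (intro borel_measurable_continuous_onI) (auto simp: cis_conv_exp intro!: continuous_intros)

lemma window_integral_reflect:
  fixes f :: "real \<Rightarrow> 'a::{banach, second_countable_topology}"
  shows "window_integral d R (\<lambda>x. f (2 * d - x)) = window_integral d R f"
proof -
  have "indicator {d - R<..<d + R} (2 * d - x) = (indicator {d - R<..<d + R} x :: real)" for x
    by (auto simp: indicator_def)
  then show ?thesis
    unfolding window_integral_def
    using lborel_integral_real_affine[of "-1" "\<lambda>x. indicator {d - R<..<d + R} x *\<^sub>R f x" "2 * d"]
    by simp
qed

lemma norm_cis_mult_of_real: "norm (cis t * complex_of_real r) = \<bar>r\<bar>"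
  by (simp add: norm_mult)

lemma integrable_window_cis_mult_sin_div:
  "integrable lborel (\<lambda>x. indicator {d - R<..<d + R} x *\<^sub>R (cis (w * x) * complex_of_real (sin (c * x) / x)))"
  by (rule integrable_indicator_bounded[where B="max \<bar>c\<bar> 1"])
    (simp_all only: norm_cis_mult_of_real abs_sin_scale_div_le, measurable)

lemma abs_mult_le_half_sum_squares:
  fixes u v :: real
  shows "\<bar>u\<bar> * \<bar>v\<bar> \<le> (u\<^sup>2 + v\<^sup>2) / 2"
  using sum_squares_bound[of "\<bar>u\<bar>" "\<bar>v\<bar>"] by (simp add: power2_eq_square)

lemma sin_eq_cis: "complex_of_real (sin t) = - (\<i> / 2) * (cis t - cis (- t))"
  by (simp add: complex_eq_iff)

lemma integrable_cis_mult_sinc_mult_sinc: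
  "integrable lborel (\<lambda>x. cis (p * x) * complex_of_real (sin (K * (b - x)) / (b - x) * (sin (c * x) / x)))"
proof (rule Bochner_Integration.integrable_bound)
  show "integrable lborel (\<lambda>x. ((sin (K * (b - x)) / (b - x))\<^sup>2 + (sin (c * x) / x)\<^sup>2) / 2)"
    using integrable_sin_scale_div_sq[of K b] integrable_sin_scale_div_sq[of c 0] by simp
  show "AE x in lborel. norm (cis (p * x) * complex_of_real (sin (K * (b - x)) / (b - x) * (sin (c * x) / x)))
      \<le> norm (((sin (K * (b - x)) / (b - x))\<^sup>2 + (sin (c * x) / x)\<^sup>2) / 2)"
  proof (intro AE_I2)
    fix x
    have "norm (cis (p * x) * complex_of_real (sin (K * (b - x)) / (b - x) * (sin (c * x) / x)))
        = \<bar>sin (K * (b - x)) / (b - x)\<bar> * \<bar>sin (c * x) / x\<bar>"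
      by (simp only: norm_cis_mult_of_real abs_mult)
    also have "\<dots> \<le> ((sin (K * (b - x)) / (b - x))\<^sup>2 + (sin (c * x) / x)\<^sup>2) / 2"
      by (rule abs_mult_le_half_sum_squares)
    finally show "norm (cis (p * x) * complex_of_real (sin (K * (b - x)) / (b - x) * (sin (c * x) / x)))
        \<le> norm (((sin (K * (b - x)) / (b - x))\<^sup>2 + (sin (c * x) / x)\<^sup>2) / 2)"
      by simp
  qed
qed measurable

lemma integrable_window_cis_mult_sin_mult_sin_div:
  "integrable lborel (\<lambda>x. indicator {a<..<a'} x *\<^sub>R
    (cis (p * x) * complex_of_real (sin (c * x) * (sin (K * (b - x)) / (b - x)))))"
proof (rule integrable_indicator_bounded)
  show "norm (cis (p * x) * complex_of_real (sin (c * x) * (sin (K * (b - x)) / (b - x)))) \<le> max \<bar>K\<bar> 1" for x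
  proof -
    have "norm (cis (p * x) * complex_of_real (sin (c * x) * (sin (K * (b - x)) / (b - x))))
        = \<bar>sin (c * x)\<bar> * \<bar>sin (K * (b - x)) / (b - x)\<bar>"
      by (simp only: norm_cis_mult_of_real abs_mult)
    also have "\<dots> \<le> 1 * max \<bar>K\<bar> 1"
      by (intro mult_mono abs_sin_le_one abs_sin_scale_div_le) auto
    finally show ?thesis by simp
  qed
qed measurable

text \<open>The reflection \<open>x \<mapsto> b - x\<close> preserves windows centred at \<open>b/2\<close> and moves the singularity of
  \<open>sin(K(b - x))/(b - x)\<close> to the origin.\<close>

lemma window_integral_cis_mult_sin_mult_sin_div:
  "window_integral (b / 2) R (\<lambda>x. cis (p * x) * complex_of_real (sin (c * x) * (sin (K * (b - x)) / (b - x))))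
    = - (\<i> / 2) * (cis ((p + c) * b) * window_integral (b / 2) R (\<lambda>y. cis (- (p + c) * y) * complex_of_real (sin (K * y) / y))
       - cis ((p - c) * b) * window_integral (b / 2) R (\<lambda>y. cis (- (p - c) * y) * complex_of_real (sin (K * y) / y)))"
proof -
  define h where "h x = cis (p * x) * complex_of_real (sin (c * x) * (sin (K * (b - x)) / (b - x)))" for x
  define A where "A w y = cis (w * y) * complex_of_real (sin (K * y) / y)" for w y
  define I where "I R y = (indicator {b / 2 - R<..<b / 2 + R} y :: real)" for R y
  have int_A: "integrable lborel (\<lambda>y. complex_of_real (I R y) * A w y)" for w
    using integrable_window_cis_mult_sin_div unfolding A_def I_def scaleR_conv_of_real .
  have h_reflect: "h (b - y) = - (\<i> / 2) * (cis ((p + c) * b) * A (- (p + c)) y - cis ((p - c) * b) * A (- (p - c)) y)"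
    for y
  proof -
    have "h (b - y) = (cis (p * (b - y)) * complex_of_real (sin (c * (b - y)))) * complex_of_real (sin (K * y) / y)"
      unfolding h_def by (simp add: algebra_simps)
    also have "cis (p * (b - y)) * complex_of_real (sin (c * (b - y)))
        = - (\<i> / 2) * (cis ((p + c) * b) * cis (- (p + c) * y) - cis ((p - c) * b) * cis (- (p - c) * y))"
      by (simp add: sin_eq_cis cis_mult algebra_simps)
    finally show ?thesis by (simp add: A_def algebra_simps)
  qed
  have "window_integral (b / 2) R h = window_integral (b / 2) R (\<lambda>y. h (b - y))"
    using window_integral_reflect[of "b / 2" R h] by simp
  also have "\<dots> = - (\<i> / 2) * (cis ((p + c) * b) * window_integral (b / 2) R (A (- (p + c)))
      - cis ((p - c) * b) * window_integral (b / 2) R (A (- (p - c))))"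
    unfolding window_integral_def I_def[symmetric] scaleR_conv_of_real h_reflect
    using int_A
    by (simp add: ring_distribs mult.left_commute[of "complex_of_real (I R _)"]
        Bochner_Integration.integral_diff integrable_mult_right)
  finally show ?thesis unfolding h_def A_def .
qed

lemma cis_mult_sinc_mult_sinc_partial_fractions:
  fixes K c p b x :: real
  assumes b: "b \<noteq> 0"
  shows "cis (p * x) * complex_of_real (sin (K * (b - x)) / (b - x) * (sin (c * x) / x)) =
    complex_of_real (1 / b) * (- (\<i> / 2) *
      (cis (K * b) * (cis ((p - K) * x) * complex_of_real (sin (c * x) / x))
       - cis (- (K * b)) * (cis ((p + K) * x) * complex_of_real (sin (c * x) / x)))
     + cis (p * x) * complex_of_real (sin (c * x) * (sin (K * (b - x)) / (b - x))))"
proof -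
  have "sin (K * (b - x)) / (b - x) * (sin (c * x) / x)
      = (1 / b) * (sin (K * (b - x)) * (sin (c * x) / x) + sin (c * x) * (sin (K * (b - x)) / (b - x)))"
    using b by (cases "x = 0 \<or> x = b") (auto simp: field_simps)
  then have "cis (p * x) * complex_of_real (sin (K * (b - x)) / (b - x) * (sin (c * x) / x))
      = complex_of_real (1 / b) * ((cis (p * x) * complex_of_real (sin (K * (b - x)))) * complex_of_real (sin (c * x) / x)
        + cis (p * x) * complex_of_real (sin (c * x) * (sin (K * (b - x)) / (b - x))))"
    by (simp only: of_real_mult of_real_add algebra_simps)
  also have "cis (p * x) * complex_of_real (sin (K * (b - x)))
      = - (\<i> / 2) * (cis (K * b) * cis ((p - K) * x) - cis (- (K * b)) * cis ((p + K) * x))"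
    by (simp add: sin_eq_cis cis_mult algebra_simps)
  finally show ?thesis by (simp add: algebra_simps)
qed

text \<open>By \<open>1/((b - x)x) = (1/b)(1/(b - x) + 1/x)\<close> the integrand splits into Fourier integrals of a
  single \<open>sin(\<cdot>)/\<cdot>\<close>, each of which is the limit of its integrals over windows centred at \<open>b/2\<close>.\<close>

lemma LBINT_cis_mult_sinc_mult_sinc:
  fixes K c p b :: real
  assumes b: "b \<noteq> 0"
  shows "(LBINT x. cis (p * x) * complex_of_real (sin (K * (b - x)) / (b - x) * (sin (c * x) / x))) =
    - (\<i> * complex_of_real (pi / (2 * b))) *
      (complex_of_real (dirichlet_box c (p - K)) * cis (K * b)
       - complex_of_real (dirichlet_box c (p + K)) * cis (- (K * b))
       + complex_of_real (dirichlet_box K (p + c)) * cis ((p + c) * b)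
       - complex_of_real (dirichlet_box K (p - c)) * cis ((p - c) * b))"
    (is "integral\<^sup>L lborel ?F = _")
proof -
  define A where "A w a x = cis (w * x) * complex_of_real (sin (a * x) / x)" for w a x
  define W where "W w a R = window_integral (b / 2) R (A w a)" for w a R
  define h where "h x = cis (p * x) * complex_of_real (sin (c * x) * (sin (K * (b - x)) / (b - x)))" for x
  define I where "I R x = (indicator {b / 2 - R<..<b / 2 + R} x :: real)" for R x
  have "integrable lborel ?F" by (rule integrable_cis_mult_sinc_mult_sinc)
  then have lim_F: "((\<lambda>R. window_integral (b / 2) R ?F) \<longlongrightarrow> integral\<^sup>L lborel ?F) at_top"
    by (rule window_integral_tendsto)
  have window_eq: "window_integral (b / 2) R ?F = - (\<i> * complex_of_real (1 / (2 * b))) *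
      (cis (K * b) * W (p - K) c R - cis (- (K * b)) * W (p + K) c R
       + cis ((p + c) * b) * W (- (p + c)) K R - cis ((p - c) * b) * W (- (p - c)) K R)" for R
  proof -
    have int_A: "integrable lborel (\<lambda>x. complex_of_real (I R x) * A w a x)" for w a
      using integrable_window_cis_mult_sin_div unfolding A_def I_def scaleR_conv_of_real .
    have int_h: "integrable lborel (\<lambda>x. complex_of_real (I R x) * h x)"
      using integrable_window_cis_mult_sin_mult_sin_div unfolding h_def I_def scaleR_conv_of_real .
    have F_split: "?F x = complex_of_real (1 / b) *
        (- (\<i> / 2) * (cis (K * b) * A (p - K) c x - cis (- (K * b)) * A (p + K) c x) + h x)" for x
      unfolding A_def h_def by (rule cis_mult_sinc_mult_sinc_partial_fractions[OF b])
    have "window_integral (b / 2) R ?F = complex_of_real (1 / b) *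
        (- (\<i> / 2) * (cis (K * b) * W (p - K) c R - cis (- (K * b)) * W (p + K) c R) + window_integral (b / 2) R h)"
      unfolding window_integral_def W_def I_def[symmetric] scaleR_conv_of_real F_split
      using int_A int_h
      by (simp add: ring_distribs mult.left_commute[of "complex_of_real (I R _)"]
          Bochner_Integration.integral_add Bochner_Integration.integral_diff integrable_mult_right)
    also have "window_integral (b / 2) R h
        = - (\<i> / 2) * (cis ((p + c) * b) * W (- (p + c)) K R - cis ((p - c) * b) * W (- (p - c)) K R)"
      unfolding h_def W_def A_def by (rule window_integral_cis_mult_sin_mult_sin_div)
    finally show ?thesis by (simp add: algebra_simps)
  qed
  have "((\<lambda>R. window_integral (b / 2) R ?F) \<longlongrightarrow> - (\<i> * complex_of_real (1 / (2 * b))) *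
      (cis (K * b) * complex_of_real (pi * dirichlet_box c (p - K))
       - cis (- (K * b)) * complex_of_real (pi * dirichlet_box c (p + K))
       + cis ((p + c) * b) * complex_of_real (pi * dirichlet_box K (- (p + c)))
       - cis ((p - c) * b) * complex_of_real (pi * dirichlet_box K (- (p - c))))) at_top"
    unfolding window_eq W_def A_def by (intro tendsto_intros window_integral_cis_mult_sin_div_tendsto)
  from tendsto_unique[OF trivial_limit_at_top_linorder lim_F this] show ?thesis
    unfolding dirichlet_box_uminus by (simp add: algebra_simps)
qed

lemma
  fixes a f :: real
  shows integrable_sin_div_sq_mult_cis_minus_1:
      "integrable lborel (\<lambda>x. complex_of_real (sin (a * x) / x\<^sup>2) * (cis (f * x) - 1))"
    and LBINT_sin_div_sq_mult_cis_minus_1: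
      "(LBINT x. complex_of_real (sin (a * x) / x\<^sup>2) * (cis (f * x) - 1))
        = \<i> * complex_of_real (pi / 2 * (\<bar>a + f\<bar> - \<bar>a - f\<bar>))"
proof -
  have split: "complex_of_real (sin (a * x) / x\<^sup>2) * (cis (f * x) - 1) =
      complex_of_real (sin (a * x) * (cos (f * x) - 1) / x\<^sup>2)
      + \<i> * complex_of_real (sin (a * x) * sin (f * x) / x\<^sup>2)" for x
    by (simp add: complex_eq_iff algebra_simps)
  have re: "integrable lborel (\<lambda>x. sin (a * x) * (cos (f * x) - 1) / x\<^sup>2)"
  proof (rule Bochner_Integration.integrable_bound)
    show "integrable lborel (\<lambda>x. (1 - cos (f * x)) / x\<^sup>2)"
      by (rule integrable_one_minus_cos_scale_div_sq)
    show "AE x in lborel. norm (sin (a * x) * (cos (f * x) - 1) / x\<^sup>2) \<le> norm ((1 - cos (f * x)) / x\<^sup>2)"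
    proof (intro AE_I2)
      fix x
      have "\<bar>sin (a * x) * (cos (f * x) - 1)\<bar> \<le> 1 * \<bar>cos (f * x) - 1\<bar>"
        unfolding abs_mult by (intro mult_right_mono) auto
      then show "norm (sin (a * x) * (cos (f * x) - 1) / x\<^sup>2) \<le> norm ((1 - cos (f * x)) / x\<^sup>2)"
        by (simp add: abs_divide divide_right_mono abs_minus_commute)
    qed
  qed measurable
  have re_integral: "(LBINT x. sin (a * x) * (cos (f * x) - 1) / x\<^sup>2) = 0"
    by (rule lborel_integral_odd) simp
  have re': "integrable lborel (\<lambda>x. complex_of_real (sin (a * x) * (cos (f * x) - 1) / x\<^sup>2))"
    using re by (rule integrable_of_real)
  have im': "integrable lborel (\<lambda>x. \<i> * complex_of_real (sin (a * x) * sin (f * x) / x\<^sup>2))"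
    using integrable_sin_mult_sin_div_sq by (intro integrable_mult_right integrable_of_real)
  show "integrable lborel (\<lambda>x. complex_of_real (sin (a * x) / x\<^sup>2) * (cis (f * x) - 1))"
    unfolding split using re' im' by (rule Bochner_Integration.integrable_add)
  show "(LBINT x. complex_of_real (sin (a * x) / x\<^sup>2) * (cis (f * x) - 1))
      = \<i> * complex_of_real (pi / 2 * (\<bar>a + f\<bar> - \<bar>a - f\<bar>))"
    by (simp only: split Bochner_Integration.integral_add[OF re' im'] integral_mult_right_zero
        integral_complex_of_real re_integral LBINT_sin_mult_sin_div_sq) simp
qed

text \<open>The convolution of the indicators of \<open>[-K, K]\<close> and \<open>[-c, c]\<close>, evaluated at \<open>p\<close>.\<close>

definition overlap_length :: "real \<Rightarrow> real \<Rightarrow> real \<Rightarrow> real" where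
  "overlap_length K c p = max 0 (min K (p + c) - max (- K) (p - c))"

lemma dirichlet_box_alternating_sum:
  fixes K c p :: real
  assumes "K > 0" "c > 0"
  shows "dirichlet_box c (p - K) - dirichlet_box c (p + K) + dirichlet_box K (p + c) - dirichlet_box K (p - c) = 0"
  using assms unfolding dirichlet_box_def sgn_if by (auto split: if_splits)

lemma overlap_length_eq_dirichlet_box_sum:
  fixes K c p :: real
  assumes "K > 0" "c > 0"
  shows "overlap_length K c p =
    (dirichlet_box c (p - K) * (\<bar>c + (K - p)\<bar> - \<bar>c - (K - p)\<bar>)
     - dirichlet_box c (p + K) * (\<bar>c + (- K - p)\<bar> - \<bar>c - (- K - p)\<bar>)
     + dirichlet_box K (p + c) * (\<bar>c + c\<bar> - \<bar>c - c\<bar>)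
     - dirichlet_box K (p - c) * (\<bar>c + - c\<bar> - \<bar>c - - c\<bar>)) / 2"
  using assms unfolding overlap_length_def dirichlet_box_def sgn_if
  by (auto simp: abs_if max_def min_def split: if_splits) (simp_all add: field_simps)

text \<open>As the coefficients of the \<open>cis(fb)\<close> sum to zero, each may be replaced by \<open>cis(fb) - 1\<close>,
  which makes the terms integrable in \<open>b\<close>.\<close>

lemma LBINT_sinc_kernel_inner:
  fixes K c p b :: real
  assumes K: "K > 0" and c: "c > 0"
  shows "(LBINT b'. cis (- (p * (b - b'))) *
      complex_of_real (sin (K * (b - b')) / (b - b') * (sin (c * b) / b) * (sin (c * b') / b')))
    = - (\<i> / 2) * complex_of_real pi * complex_of_real (sin (c * b) / b\<^sup>2) *
      (complex_of_real (dirichlet_box c (p - K)) * (cis ((K - p) * b) - 1)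
       - complex_of_real (dirichlet_box c (p + K)) * (cis ((- K - p) * b) - 1)
       + complex_of_real (dirichlet_box K (p + c)) * (cis (c * b) - 1)
       - complex_of_real (dirichlet_box K (p - c)) * (cis (- c * b) - 1))"
proof (cases "b = 0")
  case False
  define x1 where "x1 = complex_of_real (dirichlet_box c (p - K))"
  define x2 where "x2 = complex_of_real (dirichlet_box c (p + K))"
  define x3 where "x3 = complex_of_real (dirichlet_box K (p + c))"
  define x4 where "x4 = complex_of_real (dirichlet_box K (p - c))"
  define z where "z = complex_of_real (sin (c * b) / b\<^sup>2)"
  have x4: "x4 = x1 - x2 + x3"
    using dirichlet_box_alternating_sum[OF K c, of p]
    unfolding x1_def x2_def x3_def x4_def by (simp flip: of_real_diff of_real_add)
  have cis_prods: "cis (- (p * b)) * cis (K * b) = cis ((K - p) * b)"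
    "cis (- (p * b)) * cis (- (K * b)) = cis ((- K - p) * b)"
    "cis (- (p * b)) * cis ((p + c) * b) = cis (c * b)"
    "cis (- (p * b)) * cis ((p - c) * b) = cis (- c * b)"
    by (simp_all add: cis_mult algebra_simps)
  have "cis (- (p * (b - b'))) *
      complex_of_real (sin (K * (b - b')) / (b - b') * (sin (c * b) / b) * (sin (c * b') / b'))
    = (cis (- (p * b)) * complex_of_real (sin (c * b) / b)) *
      (cis (p * b') * complex_of_real (sin (K * (b - b')) / (b - b') * (sin (c * b') / b')))" for b'
  proof -
    have "cis (- (p * (b - b'))) = cis (- (p * b)) * cis (p * b')" by (simp add: cis_mult algebra_simps)
    then show ?thesis unfolding of_real_mult by (simp only: ac_simps)
  qed
  then have "(LBINT b'. cis (- (p * (b - b'))) *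
      complex_of_real (sin (K * (b - b')) / (b - b') * (sin (c * b) / b) * (sin (c * b') / b')))
    = cis (- (p * b)) * complex_of_real (sin (c * b) / b) * - (\<i> * complex_of_real (pi / (2 * b))) *
      (x1 * cis (K * b) - x2 * cis (- (K * b)) + x3 * cis ((p + c) * b) - x4 * cis ((p - c) * b))"
    unfolding x1_def x2_def x3_def x4_def
    by (simp only: integral_mult_right_zero LBINT_cis_mult_sinc_mult_sinc[OF False] mult.assoc)
  also have "\<dots> = - (\<i> / 2) * complex_of_real pi * z *
      (x1 * (cis (- (p * b)) * cis (K * b)) - x2 * (cis (- (p * b)) * cis (- (K * b)))
       + x3 * (cis (- (p * b)) * cis ((p + c) * b)) - x4 * (cis (- (p * b)) * cis ((p - c) * b)))"
    using False by (simp add: z_def field_simps power2_eq_square)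
  finally show ?thesis
    unfolding cis_prods z_def[symmetric] x1_def[symmetric] x2_def[symmetric] x3_def[symmetric]
      x4_def[symmetric] x4
    by (simp add: algebra_simps)
qed simp

lemma LBINT_LBINT_sinc_kernel:
  fixes K c p :: real
  assumes K: "K > 0" and c: "c > 0"
  shows "(LBINT b. LBINT b'. cis (- (p * (b - b'))) *
      complex_of_real (sin (K * (b - b')) / (b - b') * (sin (c * b) / b) * (sin (c * b') / b')))
    = complex_of_real (pi\<^sup>2 / 2 * overlap_length K c p)"
proof -
  define x1 where "x1 = complex_of_real (dirichlet_box c (p - K))"
  define x2 where "x2 = complex_of_real (dirichlet_box c (p + K))"
  define x3 where "x3 = complex_of_real (dirichlet_box K (p + c))"
  define x4 where "x4 = complex_of_real (dirichlet_box K (p - c))"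
  define V where "V f b = complex_of_real (sin (c * b) / b\<^sup>2) * (cis (f * b) - 1)" for f b
  have integrable_V: "integrable lborel (V f)" for f
    unfolding V_def[abs_def] by (rule integrable_sin_div_sq_mult_cis_minus_1)
  have inner: "(LBINT b'. cis (- (p * (b - b'))) *
      complex_of_real (sin (K * (b - b')) / (b - b') * (sin (c * b) / b) * (sin (c * b') / b')))
    = - (\<i> / 2) * complex_of_real pi *
        (x1 * V (K - p) b - x2 * V (- K - p) b + x3 * V c b - x4 * V (- c) b)" for b
    unfolding LBINT_sinc_kernel_inner[OF K c] V_def x1_def x2_def x3_def x4_def by algebra
  have "(LBINT b. - (\<i> / 2) * complex_of_real pi *
        (x1 * V (K - p) b - x2 * V (- K - p) b + x3 * V c b - x4 * V (- c) b))
      = - (\<i> / 2) * complex_of_real pi *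
      (x1 * integral\<^sup>L lborel (V (K - p)) - x2 * integral\<^sup>L lborel (V (- K - p))
       + x3 * integral\<^sup>L lborel (V c) - x4 * integral\<^sup>L lborel (V (- c)))"
    using integrable_V
    by (simp add: integrable_mult_right Bochner_Integration.integral_add Bochner_Integration.integral_diff)
  also have "\<dots> = complex_of_real (pi\<^sup>2 / 2 * overlap_length K c p)"
    unfolding V_def[abs_def] LBINT_sin_div_sq_mult_cis_minus_1 x1_def x2_def x3_def x4_def
      overlap_length_eq_dirichlet_box_sum[OF K c]
    by (simp add: complex_eq_iff power2_eq_square field_simps)
  finally show ?thesis unfolding inner .
qed

lemma overlap_length_uminus [simp]: "overlap_length K c (- p) = overlap_length K c p"
  unfolding overlap_length_def by (simp add: max_def min_def)

lemma overlap_length_eq_0_iff: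
  assumes "K > 0" "c > 0"
  shows "overlap_length K c p = 0 \<longleftrightarrow> K + c \<le> \<bar>p\<bar>"
  using assms unfolding overlap_length_def by (auto simp: max_def min_def abs_if)

lemma overlap_length_rising:
  assumes "0 \<le> K" "0 \<le> c" "- (K + c) \<le> p" "p \<le> - \<bar>K - c\<bar>"
  shows "overlap_length K c p = K + c + p"
  using assms unfolding overlap_length_def by (auto simp: max_def min_def abs_if split: if_splits)

lemma overlap_length_plateau:
  assumes "0 \<le> K" "0 \<le> c" "\<bar>p\<bar> \<le> \<bar>K - c\<bar>"
  shows "overlap_length K c p = 2 * min K c"
  using assms unfolding overlap_length_def by (auto simp: max_def min_def abs_if split: if_splits)

lemma overlap_length_falling:
  assumes "0 \<le> K" "0 \<le> c" "\<bar>K - c\<bar> \<le> p" "p \<le> K + c"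
  shows "overlap_length K c p = K + c - p"
  using assms unfolding overlap_length_def by (auto simp: max_def min_def abs_if split: if_splits)

section \<open>The momentum densities of the pointer states\<close>

lemma
  fixes alpha g0 kappa0 b0 lam :: real
  assumes "alpha > 0" "g0 > 0" "kappa0 > 0" "b0 > 0" "lam > 2 * b0"
  shows Kpar_eq: "Kpar alpha g0 kappa0 b0 lam = lam / 2 - b0"
    and Cpar_eq: "Cpar alpha g0 kappa0 b0 lam = 2 / (lam - 2 * b0)"
  using assms by (simp_all add: Kpar_def Cpar_def dtauO_def field_simps)

lemma mom_density_rho_kernel:
  fixes hbar alpha g0 kappa0 b0 lam sg s :: real
  assumes hbar: "hbar > 0" and params: "alpha > 0" "g0 > 0" "kappa0 > 0" "b0 > 0" "lam > 2 * b0"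
  shows "mom_density hbar (rho_kernel sg alpha g0 kappa0 b0 lam) s = complex_of_real
    (overlap_length (lam / 2 - b0) b0 (s / hbar - sg * lam / 2) / (2 * b0 * hbar * (lam - 2 * b0)))"
proof -
  define K where "K = lam / 2 - b0"
  define C where "C = 2 / (lam - 2 * b0)"
  define p where "p = s / hbar - sg * lam / 2"
  have "K > 0" using params by (simp add: K_def)
  have integrand: "exp (- \<i> * complex_of_real (s * (b - b') / hbar)) * rho_kernel sg alpha g0 kappa0 b0 lam b b'
      = complex_of_real (C / (b0 * pi)) * (cis (- (p * (b - b'))) *
        complex_of_real (sin (K * (b - b')) / (b - b') * (sin (b0 * b) / b) * (sin (b0 * b') / b')))" for b b'
  proof -
    have "exp (- \<i> * complex_of_real (s * (b - b') / hbar)) * exp (complex_of_real sg * \<i> * complex_of_real (lam / 2 * (b - b')))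
        = cis (- (p * (b - b')))"
      using hbar by (simp add: cis_conv_exp exp_add[symmetric] p_def algebra_simps diff_divide_distrib)
    then show ?thesis
      unfolding rho_kernel_def Kpar_eq[OF params] Cpar_eq[OF params] K_def[symmetric] C_def[symmetric]
      by (simp only: of_real_mult ac_simps)
  qed
  have "mom_density hbar (rho_kernel sg alpha g0 kappa0 b0 lam) s
      = complex_of_real (1 / (2 * pi * hbar) * (C / (b0 * pi) * (pi\<^sup>2 / 2 * overlap_length K b0 p)))"
    unfolding mom_density_def integrand integral_mult_right_zero
      LBINT_LBINT_sinc_kernel[OF \<open>K > 0\<close> \<open>b0 > 0\<close>]
    by simp
  also have "1 / (2 * pi * hbar) * (C / (b0 * pi) * (pi\<^sup>2 / 2 * overlap_length K b0 p))
      = overlap_length K b0 p / (2 * b0 * hbar * (lam - 2 * b0))"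
    using hbar params by (simp add: C_def field_simps power2_eq_square)
  finally show ?thesis by (simp add: K_def p_def)
qed

definition pointer_density :: "real \<Rightarrow> real \<Rightarrow> real \<Rightarrow> real \<Rightarrow> real" where
  "pointer_density hbar b0 lam s =
    overlap_length (lam / 2 - b0) b0 (s / hbar - lam / 2) / (2 * b0 * hbar * (lam - 2 * b0))"

lemma
  fixes hbar alpha g0 kappa0 b0 lam s :: real
  assumes "hbar > 0" "alpha > 0" "g0 > 0" "kappa0 > 0" "b0 > 0" "lam > 2 * b0"
  shows mom_density_rho_plus:
      "mom_density hbar (rho_plus alpha g0 kappa0 b0 lam) s = complex_of_real (pointer_density hbar b0 lam s)"
    and mom_density_rho_minus:
      "mom_density hbar (rho_minus alpha g0 kappa0 b0 lam) s = complex_of_real (pointer_density hbar b0 lam (- s))"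
proof -
  show "mom_density hbar (rho_plus alpha g0 kappa0 b0 lam) s = complex_of_real (pointer_density hbar b0 lam s)"
    using mom_density_rho_kernel[OF assms, of 1 s] by (simp add: rho_plus_def pointer_density_def)
  have "- s / hbar - lam / 2 = - (s / hbar - (- 1) * lam / 2)" by simp
  then show "mom_density hbar (rho_minus alpha g0 kappa0 b0 lam) s
      = complex_of_real (pointer_density hbar b0 lam (- s))"
    using mom_density_rho_kernel[OF assms, of "- 1" s]
    by (simp only: rho_minus_def pointer_density_def overlap_length_uminus)
qed

context
  fixes hbar b0 lam :: real
  assumes hbar: "hbar > 0" and b0: "b0 > 0" and lam: "lam > 2 * b0"
begin

lemma pointer_density_eq_0_iff: "pointer_density hbar b0 lam s = 0 \<longleftrightarrow> s \<notin> {0<..<lam * hbar}"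
proof -
  define t where "t = s / hbar"
  have "pointer_density hbar b0 lam s = 0 \<longleftrightarrow> lam / 2 \<le> \<bar>t - lam / 2\<bar>"
    using hbar b0 lam overlap_length_eq_0_iff[of "lam / 2 - b0" b0]
    by (simp add: pointer_density_def t_def)
  also have "\<dots> \<longleftrightarrow> t \<le> 0 \<or> lam \<le> t"
    by (cases "t \<le> lam / 2") auto
  also have "\<dots> \<longleftrightarrow> s \<notin> {0<..<lam * hbar}"
    using hbar by (auto simp: t_def divide_le_0_iff pos_le_divide_eq)
  finally show ?thesis .
qed

lemma pointer_density_rising:
  assumes "0 \<le> s" "s \<le> min (2 * b0) (lam - 2 * b0) * hbar"
  shows "pointer_density hbar b0 lam s = s / (2 * b0 * hbar\<^sup>2 * (lam - 2 * b0))"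
proof -
  define t where "t = s / hbar"
  have "0 \<le> t" "t \<le> min (2 * b0) (lam - 2 * b0)"
    using assms hbar unfolding t_def pos_divide_le_eq[OF hbar] by simp_all
  then have "overlap_length (lam / 2 - b0) b0 (t - lam / 2) = t"
    using b0 lam by (subst overlap_length_rising) (auto simp: abs_if min_def)
  then show ?thesis by (simp add: pointer_density_def t_def power2_eq_square)
qed

lemma pointer_density_plateau:
  assumes "min (2 * b0) (lam - 2 * b0) * hbar \<le> s" "s \<le> max (2 * b0) (lam - 2 * b0) * hbar"
  shows "pointer_density hbar b0 lam s = min (2 * b0) (lam - 2 * b0) / (2 * b0 * hbar * (lam - 2 * b0))"
proof -
  define t where "t = s / hbar"
  have "min (2 * b0) (lam - 2 * b0) \<le> t" "t \<le> max (2 * b0) (lam - 2 * b0)"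
    using assms unfolding t_def pos_divide_le_eq[OF hbar] pos_le_divide_eq[OF hbar] .
  then have "overlap_length (lam / 2 - b0) b0 (t - lam / 2) = min (2 * b0) (lam - 2 * b0)"
    using b0 lam by (subst overlap_length_plateau) (auto simp: abs_if min_def max_def)
  then show ?thesis by (simp add: pointer_density_def t_def)
qed

lemma pointer_density_falling:
  assumes "max (2 * b0) (lam - 2 * b0) * hbar \<le> s" "s \<le> lam * hbar"
  shows "pointer_density hbar b0 lam s = (lam - s / hbar) / (2 * b0 * hbar * (lam - 2 * b0))"
proof -
  define t where "t = s / hbar"
  have "max (2 * b0) (lam - 2 * b0) \<le> t" "t \<le> lam"
    using assms unfolding t_def pos_divide_le_eq[OF hbar] pos_le_divide_eq[OF hbar] .
  then have "overlap_length (lam / 2 - b0) b0 (t - lam / 2) = lam - t"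
    using b0 lam by (subst overlap_length_falling) (auto simp: abs_if max_def)
  then show ?thesis by (simp add: pointer_density_def t_def)
qed

lemma pointer_density_wide:
  assumes "lam > 4 * b0"
  shows "(\<forall>s\<in>{0..2 * b0 * hbar}. pointer_density hbar b0 lam s = s / (2 * b0 * hbar\<^sup>2 * (lam - 2 * b0)))
    \<and> (\<forall>s\<in>{2 * b0 * hbar..(lam - 2 * b0) * hbar}. pointer_density hbar b0 lam s = 1 / ((lam - 2 * b0) * hbar))
    \<and> (\<forall>s\<in>{(lam - 2 * b0) * hbar..lam * hbar}.
         pointer_density hbar b0 lam s = (lam - s / hbar) / (2 * b0 * hbar * (lam - 2 * b0)))"
proof -
  have "min (2 * b0) (lam - 2 * b0) = 2 * b0" "max (2 * b0) (lam - 2 * b0) = lam - 2 * b0"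
    using assms by simp_all
  then show ?thesis
    using pointer_density_rising pointer_density_plateau pointer_density_falling hbar b0
    by auto
qed

lemma pointer_density_narrow:
  assumes "lam < 4 * b0"
  shows "(\<forall>s\<in>{0..(lam - 2 * b0) * hbar}. pointer_density hbar b0 lam s = s / (2 * b0 * hbar\<^sup>2 * (lam - 2 * b0)))
    \<and> (\<forall>s\<in>{(lam - 2 * b0) * hbar..2 * b0 * hbar}. pointer_density hbar b0 lam s = 1 / (2 * b0 * hbar))
    \<and> (\<forall>s\<in>{2 * b0 * hbar..lam * hbar}.
         pointer_density hbar b0 lam s = (lam - s / hbar) / (2 * b0 * hbar * (lam - 2 * b0)))"
proof -
  have "min (2 * b0) (lam - 2 * b0) = lam - 2 * b0" "max (2 * b0) (lam - 2 * b0) = 2 * b0"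
    using assms by simp_all
  then show ?thesis
    using pointer_density_rising pointer_density_plateau pointer_density_falling hbar lam
    by auto
qed

lemma pointer_density_critical:
  assumes "lam = 4 * b0"
  shows "(\<forall>s\<in>{0..lam * hbar / 2}. pointer_density hbar b0 lam s = 4 * s / (lam\<^sup>2 * hbar\<^sup>2))
    \<and> (\<forall>s\<in>{lam * hbar / 2..lam * hbar}. pointer_density hbar b0 lam s = 4 * (lam - s / hbar) / (lam\<^sup>2 * hbar))"
proof (intro conjI ballI)
  have half: "min (2 * b0) (lam - 2 * b0) = lam / 2" "max (2 * b0) (lam - 2 * b0) = lam / 2"
    using assms by simp_all
  fix s
  assume "s \<in> {0..lam * hbar / 2}"
  then have "pointer_density hbar b0 lam s = s / (2 * b0 * hbar\<^sup>2 * (lam - 2 * b0))"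
    by (intro pointer_density_rising) (auto simp: half)
  then show "pointer_density hbar b0 lam s = 4 * s / (lam\<^sup>2 * hbar\<^sup>2)"
    by (simp add: assms power2_eq_square)
next
  have half: "max (2 * b0) (lam - 2 * b0) = lam / 2"
    using assms by simp
  fix s
  assume "s \<in> {lam * hbar / 2..lam * hbar}"
  then have "pointer_density hbar b0 lam s = (lam - s / hbar) / (2 * b0 * hbar * (lam - 2 * b0))"
    by (intro pointer_density_falling) (auto simp: half)
  then show "pointer_density hbar b0 lam s = 4 * (lam - s / hbar) / (lam\<^sup>2 * hbar)"
    using b0 hbar by (simp add: assms power2_eq_square field_simps)
qed

end

theorem mainTheorem5:
  fixes hbar alpha g0 kappa0 b0 lam :: real
  assumes "hbar > 0" "alpha > 0" "g0 > 0" "kappa0 > 0" "b0 > 0" "lam > 2 * b0"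
  defines "Pp \<equiv> mom_density hbar (rho_plus alpha g0 kappa0 b0 lam)"
      and "Pm \<equiv> mom_density hbar (rho_minus alpha g0 kappa0 b0 lam)"
  shows "(\<forall>s. Pm s = Pp (- s))
    \<and> (\<forall>s. s \<notin> {0..lam * hbar} \<longrightarrow> Pp s = 0)
    \<and> (lam > 4 * b0 \<longrightarrow>
         (\<forall>s\<in>{0..2 * b0 * hbar}. Pp s = complex_of_real (s / (2 * b0 * hbar\<^sup>2 * (lam - 2 * b0))))
       \<and> (\<forall>s\<in>{2 * b0 * hbar..(lam - 2 * b0) * hbar}. Pp s = complex_of_real (1 / ((lam - 2 * b0) * hbar)))
       \<and> (\<forall>s\<in>{(lam - 2 * b0) * hbar..lam * hbar}.
            Pp s = complex_of_real ((lam - s / hbar) / (2 * b0 * hbar * (lam - 2 * b0)))))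
    \<and> (2 * b0 < lam \<and> lam < 4 * b0 \<longrightarrow>
         (\<forall>s\<in>{0..(lam - 2 * b0) * hbar}. Pp s = complex_of_real (s / (2 * b0 * hbar\<^sup>2 * (lam - 2 * b0))))
       \<and> (\<forall>s\<in>{(lam - 2 * b0) * hbar..2 * b0 * hbar}. Pp s = complex_of_real (1 / (2 * b0 * hbar)))
       \<and> (\<forall>s\<in>{2 * b0 * hbar..lam * hbar}.
            Pp s = complex_of_real ((lam - s / hbar) / (2 * b0 * hbar * (lam - 2 * b0)))))
    \<and> (lam = 4 * b0 \<longrightarrow>
         (\<forall>s\<in>{0..lam * hbar / 2}. Pp s = complex_of_real (4 * s / (lam\<^sup>2 * hbar\<^sup>2)))
       \<and> (\<forall>s\<in>{lam * hbar / 2..lam * hbar}. Pp s = complex_of_real (4 * (lam - s / hbar) / (lam\<^sup>2 * hbar))))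
    \<and> closure {s. Pp s \<noteq> 0} = {0..lam * hbar}
    \<and> closure {s. Pm s \<noteq> 0} = {- lam * hbar..0}
    \<and> {0..lam * hbar} \<inter> {- lam * hbar..0} = {0}"
proof -
  note params = assms(1-6)
  have Pp: "Pp s = complex_of_real (pointer_density hbar b0 lam s)" for s
    unfolding Pp_def by (rule mom_density_rho_plus[OF params])
  have Pm: "Pm s = complex_of_real (pointer_density hbar b0 lam (- s))" for s
    unfolding Pm_def by (rule mom_density_rho_minus[OF params])
  note zero_iff = pointer_density_eq_0_iff[OF assms(1,5,6)]
  have "0 < lam * hbar" using assms by simp
  have "{s. Pp s \<noteq> 0} = {0<..<lam * hbar}" by (auto simp: Pp zero_iff)
  moreover have "{s. Pm s \<noteq> 0} = {- lam * hbar<..<0}" by (auto simp: Pm zero_iff)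
  ultimately have "closure {s. Pp s \<noteq> 0} = {0..lam * hbar}" "closure {s. Pm s \<noteq> 0} = {- lam * hbar..0}"
    using \<open>0 < lam * hbar\<close> by simp_all
  then show ?thesis
    using \<open>0 < lam * hbar\<close> pointer_density_wide[OF assms(1,5,6)] pointer_density_narrow[OF assms(1,5,6)]
      pointer_density_critical[OF assms(1,5,6)]
    by (auto simp: Pp Pm zero_iff)
qed

end
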